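(* Let $d \ge 1$ and let $N_0, \ldots, N_{d-1}$ be positive integers (the extents of the dimensions of an iteration space, ordered by a fixed loop order). For each $m \in \{0,\ldots,d-1\}$ and each prefix $\bar{x}_m = (x_0,\ldots,x_{m-1})$ with $x_k \in \{0,\ldots,N_k-1\}$, let $\mathbf{C}_m(\,\cdot \mid \bar{x}_m) : \{0,1,\ldots,N_m\} \to \mathbb{R}_{\ge 0}$ be a cost function satisfying: (i) $\mathbf{C}_m(0 \mid \bar{x}_m) = 0$; (ii) (monotonicity) $\mathbf{C}_m(x \mid \bar{x}_m) \le \mathbf{C}_m(x+1 \mid \bar{x}_m)$ for all $0 \le x < N_m$; (iii) (hierarchical consistency) for every $m < d-1$ and every $x_m \in \{0,\ldots,N_m-1\}$, $\mathbf{C}_m(x_m+1 \mid \bar{x}_m) = \mathbf{C}_m(x_m \mid \bar{x}_m) + \mathbf{C}_{m+1}(N_{m+1} \mid \bar{x}_m, x_m)$. Define $\Delta_{d-1} = \max\big(\mathbf{C}_{d-1}(x+1 \mid \bar{x}_{d-1}) - \mathbf{C}_{d-1}(x \mid \bar{x}_{d-1})\big)$, the maximum taken over all prefixes $\bar{x}_{d-1}$ and all $0 \le x < N_{d-1}$. Let $\mathcal{Q}$ be a query cost with $0 \le \mathcal{Q} < \mathbf{C}_0(N_0)$, and let $\bar{x} = (x_0,\ldots,x_{d-1})$ be the output of the following procedure: set $\mathcal{R}_0 = \mathcal{Q}$; for $m = 0,1,\ldots,d-1$ in order, let $x_m$ be the largest $x \in \{0,\ldots,N_m-1\}$ with $\mathbf{C}_m(x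 \mid x_0,\ldots,x_{m-1}) \le \mathcal{R}_m$, and set $\mathcal{R}_{m+1} = \mathcal{R}_m - \mathbf{C}_m(x_m \mid x_0,\ldots,x_{m-1})$. Then, writing $\mathbf{C}(\bar{x}) = \sum_{m=0}^{d-1} \mathbf{C}_m(x_m \mid x_0,\ldots,x_{m-1})$, we have $0 \le \mathcal{Q} - \mathbf{C}(\bar{x}) < \Delta_{d-1}$.
   Context: $\mathbf{C}_m(x \mid x_0,\ldots,x_{m-1})$ models the cost of coiterating, in lexicographic order of the $d$-dimensional iteration space, from coordinate $(x_0,\ldots,x_{m-1},0,\ldots,0)$ up to (but excluding) coordinate $(x_0,\ldots,x_{m-1},x,0,\ldots,0)$; i.e. the cost of the subspace with the first $m$ coordinates fixed, the $m$-th coordinate in $[0,x)$, and all later coordinates ranging over their full extents. $\mathbf{C}(\bar{x})$ is then the total cost of coiteration from $(0,\ldots,0)$ to $\bar{x}$. The procedure in the claim is the "hierarchical search partitioning" algorithm, a per-dimension binary search for a coordinate whose prefix cost is at most the remaining query cost. *)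

theory Defs
  imports Main "HOL.Real"
begin

text \<open>Cost functions are modelled as C m xs x, where m is the dimension index,
  xs the prefix (x_0,...,x_{m-1}) as a list of length m, and x the coordinate.\<close>

definition valid_prefix :: "(nat \<Rightarrow> nat) \<Rightarrow> nat \<Rightarrow> nat list \<Rightarrow> bool" where
  "valid_prefix N m xs \<longleftrightarrow> length xs = m \<and> (\<forall>k<m. xs ! k < N k)"

fun hsp :: "(nat \<Rightarrow> nat list \<Rightarrow> nat \<Rightarrow> real) \<Rightarrow> (nat \<Rightarrow> nat) \<Rightarrow> nat \<Rightarrow> nat list \<Rightarrow> real \<Rightarrow> nat list" where
  "hsp C N 0 xs R = xs"
| "hsp C N (Suc k) xs R =
     (let m = length xs;
          x = (GREATEST x. x < N m \<and> C m xs x \<le> R)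
      in hsp C N k (xs @ [x]) (R - C m xs x))"

definition total_cost :: "(nat \<Rightarrow> nat list \<Rightarrow> nat \<Rightarrow> real) \<Rightarrow> nat \<Rightarrow> nat list \<Rightarrow> real" where
  "total_cost C d xs = (\<Sum>m<d. C m (take m xs) (xs ! m))"

definition Delta_last :: "(nat \<Rightarrow> nat list \<Rightarrow> nat \<Rightarrow> real) \<Rightarrow> (nat \<Rightarrow> nat) \<Rightarrow> nat \<Rightarrow> real" where
  "Delta_last C N d = Max {C (d - 1) xs (x + 1) - C (d - 1) xs x | xs x.
                           valid_prefix N (d - 1) xs \<and> x < N (d - 1)}"

end

theory Submission
  imports Defs
begin

text \<open>The remaining cost \<open>R\<^sub>m\<close> is kept in the interval \<open>[C\<^sub>m(0), C\<^sub>m(N\<^sub>m))\<close>.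
  The greatest admissible \<open>x\<^sub>m\<close> then satisfies \<open>C\<^sub>m(x\<^sub>m) \<le> R\<^sub>m < C\<^sub>m(x\<^sub>m + 1)\<close>, and
  hierarchical consistency rewrites the gap \<open>C\<^sub>m(x\<^sub>m + 1) - C\<^sub>m(x\<^sub>m)\<close> as the full cost
  \<open>C\<^sub>m\<^sub>+\<^sub>1(N\<^sub>m\<^sub>+\<^sub>1)\<close> of the next level, which re-establishes the invariant for
  \<open>R\<^sub>m\<^sub>+\<^sub>1 = R\<^sub>m - C\<^sub>m(x\<^sub>m)\<close>. In the last dimension the gap is a single increment,
  bounded by \<open>\<Delta>\<^sub>d\<^sub>-\<^sub>1\<close>, and \<open>Q - C(x)\<close> is exactly the final remainder.
  Only normalisation \<open>C\<^sub>m(0) = 0\<close> and hierarchical consistency are used.\<close>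

lemma Greatest_le_less_Suc:
  fixes f :: "nat \<Rightarrow> 'a :: linorder"
  assumes "f 0 \<le> R" "R < f n"
    and x_def: "x = (GREATEST x. x < n \<and> f x \<le> R)"
  shows "x < n \<and> f x \<le> R \<and> R < f (x + 1)"
proof -
  have "0 < n"
    using assms(1,2) by (cases n) auto
  then have x: "x < n \<and> f x \<le> R"
    unfolding x_def
    by (intro GreatestI_nat[where P = "\<lambda>x. x < n \<and> f x \<le> R" and k = 0 and b = n])
      (use assms(1) in auto)
  have maximal: "y \<le> x" if "y < n" "f y \<le> R" for y
    unfolding x_def
    by (intro Greatest_le_nat[where P = "\<lambda>x. x < n \<and> f x \<le> R" and b = n]) (use that in auto)
  have "R < f (x + 1)"
  proof (cases "x + 1 < n")
    case True
    then show ?thesis using maximal[of "x + 1"] by force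
  next
    case False
    with x have "x + 1 = n" by simp
    with assms(2) show ?thesis by simp
  qed
  with x show ?thesis by simp
qed

lemma valid_prefix_snoc:
  "valid_prefix N m xs \<Longrightarrow> x < N m \<Longrightarrow> valid_prefix N (Suc m) (xs @ [x])"
  by (auto simp: valid_prefix_def nth_append less_Suc_eq)

lemma finite_valid_prefix: "finite {xs. valid_prefix N m xs}"
proof (rule finite_subset)
  show "{xs. valid_prefix N m xs} \<subseteq> {xs. set xs \<subseteq> (\<Union>k<m. {..<N k}) \<and> length xs = m}"
    by (force simp: valid_prefix_def in_set_conv_nth)
  show "finite {xs. set xs \<subseteq> (\<Union>k<m. {..<N k}) \<and> length xs = m}"
    by (intro finite_lists_length_eq) auto
qed

lemma Delta_last_ge:
  assumes "valid_prefix N (d - 1) xs" "x < N (d - 1)"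
  shows "C (d - 1) xs (x + 1) - C (d - 1) xs x \<le> Delta_last C N d"
proof -
  let ?gap = "\<lambda>(xs, x). C (d - 1) xs (x + 1) - C (d - 1) xs x"
  let ?S = "{xs. valid_prefix N (d - 1) xs} \<times> {..<N (d - 1)}"
  have S: "{C (d - 1) xs (x + 1) - C (d - 1) xs x | xs x. valid_prefix N (d - 1) xs \<and> x < N (d - 1)}
      = ?gap ` ?S"
    by auto
  have "finite (?gap ` ?S)"
    using finite_valid_prefix by blast
  moreover have "?gap (xs, x) \<in> ?gap ` ?S"
    using assms by blast
  ultimately have "?gap (xs, x) \<le> Max (?gap ` ?S)"
    by (rule Max_ge)
  then show ?thesis
    unfolding Delta_last_def S by simp
qed

lemma hsp_extends: "\<exists>ys. hsp C N k xs R = xs @ ys"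
proof (induction k arbitrary: xs R)
  case (Suc k)
  let ?x = "GREATEST x. x < N (length xs) \<and> C (length xs) xs x \<le> R"
  obtain ys where "hsp C N k (xs @ [?x]) (R - C (length xs) xs ?x) = (xs @ [?x]) @ ys"
    using Suc.IH by blast
  then have "hsp C N (Suc k) xs R = xs @ ?x # ys"
    by (simp add: Let_def)
  then show ?case ..
qed simp

lemma hsp_remainder_bounds:
  assumes C_zero: "\<And>m xs. m < d \<Longrightarrow> valid_prefix N m xs \<Longrightarrow> C m xs 0 = 0"
    and C_hier: "\<And>m xs x. m < d - 1 \<Longrightarrow> valid_prefix N m xs \<Longrightarrow> x < N m \<Longrightarrow>
                   C m xs (x + 1) = C m xs x + C (m + 1) (xs @ [x]) (N (m + 1))"
    and "length xs + Suc k = d" "valid_prefix N (length xs) xs"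
    and "0 \<le> R" "R < C (length xs) xs (N (length xs))"
  shows "0 \<le> R - (\<Sum>i\<in>{length xs..<d}. C i (take i (hsp C N (Suc k) xs R)) (hsp C N (Suc k) xs R ! i))
       \<and> R - (\<Sum>i\<in>{length xs..<d}. C i (take i (hsp C N (Suc k) xs R)) (hsp C N (Suc k) xs R ! i))
         < Delta_last C N d"
  using assms(3-6)
proof (induction k arbitrary: xs R)
  case (0 xs R)
  define x where "x = (GREATEST x. x < N (d - 1) \<and> C (d - 1) xs x \<le> R)"
  have len: "length xs = d - 1" "d - 1 < d" using "0.prems"(1) by auto
  have "x < N (d - 1) \<and> C (d - 1) xs x \<le> R \<and> R < C (d - 1) xs (x + 1)"
    using "0.prems" C_zero[of "d - 1" xs] len by (intro Greatest_le_less_Suc[OF _ _ x_def]) auto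
  moreover have "hsp C N (Suc 0) xs R = xs @ [x]"
    using len by (simp add: Let_def x_def)
  moreover have "{length xs..<d} = {d - 1}" using len by auto
  ultimately show ?case
    using Delta_last_ge[of N d xs x C] "0.prems"(2) len by (simp add: nth_append)
next
  case (Suc k xs R)
  define m where "m = length xs"
  define x where "x = (GREATEST x. x < N m \<and> C m xs x \<le> R)"
  define R' where "R' = R - C m xs x"
  have m_less: "m < d - 1" using Suc.prems(1) m_def by simp
  have x: "x < N m \<and> C m xs x \<le> R \<and> R < C m xs (x + 1)"
    using Suc.prems C_zero[of m xs] m_less m_def by (intro Greatest_le_less_Suc[OF _ _ x_def]) auto
  have valid: "valid_prefix N (length (xs @ [x])) (xs @ [x])"
    using Suc.prems(2) x m_def by (simp add: valid_prefix_snoc)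
  obtain zs where zs: "hsp C N (Suc k) (xs @ [x]) R' = xs @ x # zs"
    using hsp_extends[of C N "Suc k" "xs @ [x]" R'] by auto
  have "R' < C (Suc m) (xs @ [x]) (N (Suc m))"
    using C_hier[of m xs x] Suc.prems(2) m_less x m_def R'_def by simp
  then have IH: "0 \<le> R' - (\<Sum>i\<in>{Suc m..<d}. C i (take i (xs @ x # zs)) ((xs @ x # zs) ! i))
       \<and> R' - (\<Sum>i\<in>{Suc m..<d}. C i (take i (xs @ x # zs)) ((xs @ x # zs) ! i))
         < Delta_last C N d"
    using Suc.IH[of "xs @ [x]" R'] Suc.prems(1) valid x m_def R'_def zs by simp
  have hsp_eq: "hsp C N (Suc (Suc k)) xs R = xs @ x # zs"
    using zs by (simp add: Let_def x_def R'_def m_def)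
  have cost_eq: "(\<Sum>i\<in>{m..<d}. C i (take i (xs @ x # zs)) ((xs @ x # zs) ! i))
      = C m xs x + (\<Sum>i\<in>{Suc m..<d}. C i (take i (xs @ x # zs)) ((xs @ x # zs) ! i))"
    using m_less m_def by (simp add: sum.atLeast_Suc_lessThan)
  show ?case
    unfolding hsp_eq m_def[symmetric] cost_eq using IH R'_def by linarith
qed

theorem theorem1:
  fixes d :: nat and N :: "nat \<Rightarrow> nat" and C :: "nat \<Rightarrow> nat list \<Rightarrow> nat \<Rightarrow> real"
    and Q :: real
  assumes d_pos: "d \<ge> 1"
    and N_pos: "\<And>k. k < d \<Longrightarrow> N k > 0"
    and C_nonneg: "\<And>m xs x. m < d \<Longrightarrow> valid_prefix N m xs \<Longrightarrow> x \<le> N m \<Longrightarrow> C m xs x \<ge> 0"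
    and C_zero: "\<And>m xs. m < d \<Longrightarrow> valid_prefix N m xs \<Longrightarrow> C m xs 0 = 0"
    and C_mono: "\<And>m xs x. m < d \<Longrightarrow> valid_prefix N m xs \<Longrightarrow> x < N m \<Longrightarrow> C m xs x \<le> C m xs (x + 1)"
    and C_hier: "\<And>m xs x. m < d - 1 \<Longrightarrow> valid_prefix N m xs \<Longrightarrow> x < N m \<Longrightarrow>
                   C m xs (x + 1) = C m xs x + C (m + 1) (xs @ [x]) (N (m + 1))"
    and Q_nonneg: "0 \<le> Q"
    and Q_lt: "Q < C 0 [] (N 0)"
  shows "0 \<le> Q - total_cost C d (hsp C N d [] Q)
       \<and> Q - total_cost C d (hsp C N d [] Q) < Delta_last C N d"
proof -
  obtain k where k: "d = Suc k" using d_pos by (cases d) auto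
  have "valid_prefix N 0 []" by (simp add: valid_prefix_def)
  with hsp_remainder_bounds[of d N C "[]" k Q] C_zero C_hier k Q_nonneg Q_lt
  show ?thesis by (simp add: total_cost_def lessThan_atLeast0 del: hsp.simps)
qed

end
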